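(* Let $\mathfrak{C}=(U,M,I,N,J)$ be a formal decision context. Then the set of necessary I-decision rules of $\mathfrak{C}$ is $$\overline{\mathfrak{R}}_{I}(\mathfrak{C})=\{(O^{\square_M\lozenge_M},O^{\square_M})\rightarrow(\cap[O]_{R_2},(\cap[O]_{R_2})^{\uparrow_N})\mid O\in\mathrm{Ext}L(\mathfrak{C}_N),\ O\ne U,\ O^{\square_M\lozenge_M}\neq\emptyset\}.$$
   Context: Formal context $(U,M,I)$: $U$ and $M$ are finite nonempty sets and $I\subseteq U\times M$. For $O\subseteq U$ and $C\subseteq M$ define: - $O^{\uparrow}=\{a\in M\mid \forall x\in O\,((x,a)\in I)\}$ and $C^{\downarrow}=\{x\in U\mid \forall a\in C\,((x,a)\in I)\}$; - $O^{\square}=\{a\in M\mid \forall x\in U\,((x,a)\in I\Rightarrow x\in O)\}$ and $C^{\lozenge}=\{x\in U\mid \exists a\in C\,((x,a)\in I)\}$. A formal concept is a pair $(O,C)$ with $O^\uparrow=C$ and $C^\downarrow=O$ (set $L$). An object-oriented concept is a pair $(O,C)$ with $O^\square=C$ and $C^\lozenge=O$ (set $L_O$). $\mathrm{Ext}$ denotes the set of extents. Standing assumption: contexts are canonical, i.e. for all $x\in U$ and $a\in M$ we have $\{x\}^\uparrow\notin\{\emptyset,M\}$ and $\{a\}^\downarrow\notin\{\emptyset,U\}$. A formal decision context $\mathfrak{C}=(U,M,I,N,J)$ has conditional context $\mathfrak{C}_M=(U,M,I)$ and decision context $\mathfrak{C}_N=(U,N,J)$, with $M\cap N=\emptyset$.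 Operators carry the subscript $M$ or $N$ according to the context in which they are computed. An I-decision rule is $(O,C)\rightarrow(Y,D)$ with $(O,C)\in L_O(\mathfrak{C}_M)$, $(Y,D)\in L(\mathfrak{C}_N)$, $O\subseteq Y$, $O\ne\emptyset$ and $Y\ne U$; the set of these is $\mathfrak{R}_I(\mathfrak{C})$. Implication: $(O_1,C_1)\rightarrow(Y_1,D_1)\Rightarrow(O_2,C_2)\rightarrow(Y_2,D_2)$ iff $O_2\subseteq O_1\subseteq Y_1\subseteq Y_2$. A rule $r$ is necessary if there is no $r_1\in\mathfrak{R}_I(\mathfrak{C})$ with $r_1\ne r$ and $r_1\Rightarrow r$. $R_2$ is the equivalence relation on $\mathrm{Ext}L(\mathfrak{C}_N)$ given by $(O,Y)\in R_2$ iff $O^{\square_M}=Y^{\square_M}$. $[O]_{R_2}$ is the class of $O$, and $\cap[O]_{R_2}$ is the intersection of its members. *)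

theory Defs
  imports Main
begin

definition fc_context :: "'u set \<Rightarrow> 'm set \<Rightarrow> ('u \<times> 'm) set \<Rightarrow> bool" where
  "fc_context U M I \<longleftrightarrow> finite U \<and> finite M \<and> U \<noteq> {} \<and> M \<noteq> {} \<and> I \<subseteq> U \<times> M"

definition up :: "'u set \<Rightarrow> 'm set \<Rightarrow> ('u \<times> 'm) set \<Rightarrow> 'u set \<Rightarrow> 'm set" where
  "up U M I X = {a \<in> M. \<forall>x \<in> X. (x, a) \<in> I}"

definition down :: "'u set \<Rightarrow> 'm set \<Rightarrow> ('u \<times> 'm) set \<Rightarrow> 'm set \<Rightarrow> 'u set" where
  "down U M I C = {x \<in> U. \<forall>a \<in> C. (x, a) \<in> I}"

definition box :: "'u set \<Rightarrow> 'm set \<Rightarrow> ('u \<times> 'm) set \<Rightarrow> 'u set \<Rightarrow> 'm set" where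
  "box U M I X = {a \<in> M. \<forall>x \<in> U. (x, a) \<in> I \<longrightarrow> x \<in> X}"

definition dia :: "'u set \<Rightarrow> 'm set \<Rightarrow> ('u \<times> 'm) set \<Rightarrow> 'm set \<Rightarrow> 'u set" where
  "dia U M I C = {x \<in> U. \<exists>a \<in> C. (x, a) \<in> I}"

definition canonical :: "'u set \<Rightarrow> 'm set \<Rightarrow> ('u \<times> 'm) set \<Rightarrow> bool" where
  "canonical U M I \<longleftrightarrow>
     (\<forall>x \<in> U. up U M I {x} \<notin> {{}, M}) \<and> (\<forall>a \<in> M. down U M I {a} \<notin> {{}, U})"

definition concepts :: "'u set \<Rightarrow> 'm set \<Rightarrow> ('u \<times> 'm) set \<Rightarrow> ('u set \<times> 'm set) set" where
  "concepts U M I = {(X, C). X \<subseteq> U \<and> C \<subseteq> M \<and> up U M I X = C \<and> down U M I C = X}"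

definition oo_concepts :: "'u set \<Rightarrow> 'm set \<Rightarrow> ('u \<times> 'm) set \<Rightarrow> ('u set \<times> 'm set) set" where
  "oo_concepts U M I = {(X, C). X \<subseteq> U \<and> C \<subseteq> M \<and> box U M I X = C \<and> dia U M I C = X}"

definition extents :: "'u set \<Rightarrow> 'm set \<Rightarrow> ('u \<times> 'm) set \<Rightarrow> 'u set set" where
  "extents U M I = fst ` concepts U M I"

type_synonym ('u, 'm, 'n) rule = "('u set \<times> 'm set) \<times> ('u set \<times> 'n set)"

definition I_rules ::
  "'u set \<Rightarrow> 'm set \<Rightarrow> ('u \<times> 'm) set \<Rightarrow> 'n set \<Rightarrow> ('u \<times> 'n) set \<Rightarrow> ('u, 'm, 'n) rule set" where
  "I_rules U M I N J = {((X, C), (Y, D)).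
      (X, C) \<in> oo_concepts U M I \<and> (Y, D) \<in> concepts U N J \<and> X \<subseteq> Y \<and> X \<noteq> {} \<and> Y \<noteq> U}"

definition rule_implies :: "('u, 'm, 'n) rule \<Rightarrow> ('u, 'm, 'n) rule \<Rightarrow> bool" where
  "rule_implies r1 r2 \<longleftrightarrow>
     fst (fst r2) \<subseteq> fst (fst r1) \<and> fst (fst r1) \<subseteq> fst (snd r1) \<and> fst (snd r1) \<subseteq> fst (snd r2)"

definition necessary_I_rules ::
  "'u set \<Rightarrow> 'm set \<Rightarrow> ('u \<times> 'm) set \<Rightarrow> 'n set \<Rightarrow> ('u \<times> 'n) set \<Rightarrow> ('u, 'm, 'n) rule set" where
  "necessary_I_rules U M I N J = {r \<in> I_rules U M I N J.
      \<not> (\<exists>r1 \<in> I_rules U M I N J. r1 \<noteq> r \<and> rule_implies r1 r)}"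

definition R2_class ::
  "'u set \<Rightarrow> 'm set \<Rightarrow> ('u \<times> 'm) set \<Rightarrow> 'n set \<Rightarrow> ('u \<times> 'n) set \<Rightarrow> 'u set \<Rightarrow> 'u set set" where
  "R2_class U M I N J X = {Y \<in> extents U N J. box U M I Y = box U M I X}"

end

theory Submission
  imports Defs
begin

text \<open>A rule \<open>(O, C) \<rightarrow> (Y, D)\<close> is necessary exactly when it cannot be tightened on either
  side: \<open>O\<close> is the largest object-oriented extent inside \<open>Y\<close>, i.e. \<open>O = Y\<^sup>\<box>\<^sup>\<lozenge>\<close>, and \<open>Y\<close> is the
  least formal extent containing \<open>O\<close>, i.e. \<open>Y = O\<^sup>\<up>\<^sup>\<down>\<close>. For an extent \<open>X\<close>, the intersection of
  \<open>[X]\<^sub>R\<^sub>2\<close> is \<open>(X\<^sup>\<box>\<^sup>\<lozenge>)\<^sup>\<up>\<^sup>\<down>\<close>: every member of the class contains \<open>X\<^sup>\<box>\<^sup>\<lozenge>\<close>, and this closure is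
  itself in the class. Both conditions hold for the rules built from \<open>X\<close> this way, and every
  necessary rule arises from \<open>X = Y\<close>.\<close>

lemma up_subset: "up U M I X \<subseteq> M"
  by (auto simp: up_def)

lemma box_subset: "box U M I X \<subseteq> M"
  by (auto simp: box_def)

lemma dia_subset: "dia U M I C \<subseteq> U"
  by (auto simp: dia_def)

lemma up_antimono: "X \<subseteq> Y \<Longrightarrow> up U M I Y \<subseteq> up U M I X"
  by (auto simp: up_def)

lemma down_antimono: "C \<subseteq> D \<Longrightarrow> down U M I D \<subseteq> down U M I C"
  by (auto simp: down_def)

lemma subset_down_up: "X \<subseteq> U \<Longrightarrow> X \<subseteq> down U M I (up U M I X)"
  by (auto simp: up_def down_def)

lemma subset_up_down: "C \<subseteq> M \<Longrightarrow> C \<subseteq> up U M I (down U M I C)"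
  by (auto simp: up_def down_def)

lemma down_up_down: "C \<subseteq> M \<Longrightarrow> down U M I (up U M I (down U M I C)) = down U M I C"
  by (intro subset_antisym down_antimono subset_up_down subset_down_up) (auto simp: down_def)

lemma extents_iff: "X \<in> extents U M I \<longleftrightarrow> X \<subseteq> U \<and> down U M I (up U M I X) = X"
  unfolding extents_def concepts_def using up_subset[of U M I] by (auto simp: image_iff)

lemma concepts_iff: "(X, C) \<in> concepts U M I \<longleftrightarrow> X \<in> extents U M I \<and> C = up U M I X"
  unfolding extents_iff concepts_def using up_subset[of U M I] by auto

lemma down_up_in_extents: "down U M I (up U M I X) \<in> extents U M I"
  by (simp add: extents_iff down_up_down up_subset) (auto simp: down_def)

lemma down_up_least:
  assumes "Y \<in> extents U M I" and "X \<subseteq> Y"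
  shows "down U M I (up U M I X) \<subseteq> Y"
proof -
  have "down U M I (up U M I X) \<subseteq> down U M I (up U M I Y)"
    using assms(2) by (intro down_antimono up_antimono)
  with assms(1) show ?thesis
    by (simp add: extents_iff)
qed

lemma box_mono: "X \<subseteq> Y \<Longrightarrow> box U M I X \<subseteq> box U M I Y"
  by (auto simp: box_def)

lemma dia_mono: "C \<subseteq> D \<Longrightarrow> dia U M I C \<subseteq> dia U M I D"
  by (auto simp: dia_def)

lemma dia_box_subset: "dia U M I (box U M I X) \<subseteq> X"
  by (auto simp: box_def dia_def)

lemma box_dia_box: "box U M I (dia U M I (box U M I X)) = box U M I X"
  by (rule subset_antisym[OF box_mono[OF dia_box_subset]]) (auto simp: box_def dia_def)

lemma oo_concepts_iff:
  "(X, C) \<in> oo_concepts U M I \<longleftrightarrow> dia U M I (box U M I X) = X \<and> C = box U M I X"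
  unfolding oo_concepts_def using dia_subset[of U M I "box U M I X"] box_subset[of U M I X]
  by auto

lemma dia_box_in_oo_concepts: "(dia U M I (box U M I X), box U M I X) \<in> oo_concepts U M I"
  by (simp add: oo_concepts_iff box_dia_box)

lemma oo_extent_subset_dia_box:
  assumes "(X, C) \<in> oo_concepts U M I" and "X \<subseteq> Y"
  shows "X \<subseteq> dia U M I (box U M I Y)"
proof -
  have "X = dia U M I (box U M I X)"
    using assms(1) by (simp add: oo_concepts_iff)
  also have "\<dots> \<subseteq> dia U M I (box U M I Y)"
    using assms(2) by (intro dia_mono box_mono)
  finally show ?thesis .
qed

lemma box_eq_if_between_dia_box:
  assumes "dia U M I (box U M I X) \<subseteq> Y" and "Y \<subseteq> X"
  shows "box U M I Y = box U M I X"
  using box_mono[OF assms(1), of U M I] box_mono[OF assms(2), of U M I]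
  by (simp add: box_dia_box)

lemma dia_box_subset_R2_class_member:
  "Y \<in> R2_class U M I N J X \<Longrightarrow> dia U M I (box U M I X) \<subseteq> Y"
  using dia_box_subset[of U M I Y] by (simp add: R2_class_def)

lemma Inter_R2_class:
  assumes "X \<in> extents U N J"
  shows "\<Inter> (R2_class U M I N J X) = down U N J (up U N J (dia U M I (box U M I X)))"
    (is "_ = ?Y")
proof (rule antisym)
  have "dia U M I (box U M I X) \<subseteq> ?Y"
    by (rule subset_down_up[OF dia_subset])
  moreover have "?Y \<subseteq> X"
    by (rule down_up_least[OF assms dia_box_subset])
  ultimately have "box U M I ?Y = box U M I X"
    by (rule box_eq_if_between_dia_box)
  then have "?Y \<in> R2_class U M I N J X"
    by (simp add: R2_class_def down_up_in_extents)
  then show "\<Inter> (R2_class U M I N J X) \<subseteq> ?Y"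
    by (rule Inter_lower)
  show "?Y \<subseteq> \<Inter> (R2_class U M I N J X)"
  proof (rule Inter_greatest)
    fix Z assume Z: "Z \<in> R2_class U M I N J X"
    then have "Z \<in> extents U N J"
      by (simp add: R2_class_def)
    with Z show "?Y \<subseteq> Z"
      by (intro down_up_least dia_box_subset_R2_class_member)
  qed
qed

lemma necessary_I_rules_iff:
  "((X, C), (Y, D)) \<in> necessary_I_rules U M I N J \<longleftrightarrow>
     ((X, C), (Y, D)) \<in> I_rules U M I N J \<and>
     dia U M I (box U M I Y) = X \<and> down U N J (up U N J X) = Y"
  (is "?r \<in> _ \<longleftrightarrow> ?r \<in> _ \<and> ?X_largest \<and> ?Y_least")
proof
  assume "?r \<in> necessary_I_rules U M I N J"
  then have r: "?r \<in> I_rules U M I N J"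
    and eq_r: "\<And>r1. r1 \<in> I_rules U M I N J \<Longrightarrow> rule_implies r1 ?r \<Longrightarrow> r1 = ?r"
    by (auto simp: necessary_I_rules_def)
  from r have oo: "(X, C) \<in> oo_concepts U M I" and Y: "(Y, D) \<in> concepts U N J"
    and "X \<subseteq> Y" "X \<noteq> {}" "Y \<noteq> U"
    by (auto simp: I_rules_def)
  have X_sub: "X \<subseteq> dia U M I (box U M I Y)"
    using oo_extent_subset_dia_box[OF oo \<open>X \<subseteq> Y\<close>] .
  have "((dia U M I (box U M I Y), box U M I Y), (Y, D)) = ?r"
    using X_sub \<open>X \<noteq> {}\<close> \<open>Y \<noteq> U\<close> Y dia_box_subset[of U M I Y]
    by (intro eq_r) (auto simp: I_rules_def rule_implies_def dia_box_in_oo_concepts)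
  then have ?X_largest
    by (metis fst_conv)
  have Y_ext: "Y \<in> extents U N J"
    using Y by (simp add: concepts_iff)
  have cl_sub: "down U N J (up U N J X) \<subseteq> Y"
    using down_up_least[OF Y_ext \<open>X \<subseteq> Y\<close>] .
  have "X \<subseteq> down U N J (up U N J X)"
    using oo by (intro subset_down_up) (auto simp: oo_concepts_def)
  moreover have "down U N J (up U N J X) \<noteq> U"
    using cl_sub \<open>Y \<noteq> U\<close> Y_ext by (auto simp: extents_iff)
  ultimately have "((X, C), (down U N J (up U N J X), up U N J (down U N J (up U N J X)))) = ?r"
    using oo cl_sub \<open>X \<noteq> {}\<close>
    by (intro eq_r) (auto simp: I_rules_def rule_implies_def concepts_iff down_up_in_extents)
  then have ?Y_least
    by (metis fst_conv snd_conv)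
  with r \<open>?X_largest\<close> show "?r \<in> I_rules U M I N J \<and> ?X_largest \<and> ?Y_least"
    by blast
next
  assume "?r \<in> I_rules U M I N J \<and> ?X_largest \<and> ?Y_least"
  then have r: "?r \<in> I_rules U M I N J" and ?X_largest ?Y_least
    by blast+
  have "r1 = ?r" if r1: "r1 \<in> I_rules U M I N J" and imp: "rule_implies r1 ?r" for r1
  proof -
    obtain X1 C1 Y1 D1 where r1_eq: "r1 = ((X1, C1), (Y1, D1))"
      by (metis prod.collapse)
    from r1 imp have oo1: "(X1, C1) \<in> oo_concepts U M I" and Y1: "(Y1, D1) \<in> concepts U N J"
      and "X \<subseteq> X1" "X1 \<subseteq> Y1" "Y1 \<subseteq> Y"
      by (auto simp: r1_eq I_rules_def rule_implies_def)
    have "X1 \<subseteq> X"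
      using oo_extent_subset_dia_box[OF oo1] \<open>X1 \<subseteq> Y1\<close> \<open>Y1 \<subseteq> Y\<close> \<open>?X_largest\<close> by blast
    then have "X1 = X"
      using \<open>X \<subseteq> X1\<close> by blast
    have "Y \<subseteq> Y1"
      using Y1 \<open>X \<subseteq> X1\<close> \<open>X1 \<subseteq> Y1\<close> \<open>?Y_least\<close> down_up_least[of Y1 U N J X]
      by (auto simp: concepts_iff)
    then have "Y1 = Y"
      using \<open>Y1 \<subseteq> Y\<close> by blast
    show ?thesis
      using r oo1 Y1 \<open>X1 = X\<close> \<open>Y1 = Y\<close>
      by (auto simp: r1_eq I_rules_def oo_concepts_iff concepts_iff)
  qed
  with r show "?r \<in> necessary_I_rules U M I N J"
    by (auto simp: necessary_I_rules_def)
qed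

lemma dia_box_rule_in_necessary_I_rules:
  assumes X: "X \<in> extents U N J" "X \<noteq> U" "dia U M I (box U M I X) \<noteq> {}"
  defines "Y \<equiv> down U N J (up U N J (dia U M I (box U M I X)))"
  shows "((dia U M I (box U M I X), box U M I X), (Y, up U N J Y)) \<in> necessary_I_rules U M I N J"
proof -
  have "dia U M I (box U M I X) \<subseteq> Y"
    unfolding Y_def by (rule subset_down_up[OF dia_subset])
  moreover have "Y \<subseteq> X"
    unfolding Y_def by (rule down_up_least[OF X(1) dia_box_subset])
  moreover have "X \<subseteq> U"
    using X(1) by (simp add: extents_iff)
  ultimately have "Y \<noteq> U" "box U M I Y = box U M I X"
    using X(2) by (auto simp: box_eq_if_between_dia_box)
  with X(3) \<open>dia U M I (box U M I X) \<subseteq> Y\<close> show ?thesis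
    by (simp add: necessary_I_rules_iff I_rules_def dia_box_in_oo_concepts concepts_iff)
      (simp add: Y_def down_up_in_extents)
qed

theorem theorem3p7:
  fixes U :: "'u set" and M :: "'m set" and I :: "('u \<times> 'm) set"
    and N :: "'n set" and J :: "('u \<times> 'n) set"
  assumes "fc_context U M I" and "fc_context U N J"
    and "canonical U M I" and "canonical U N J"
  shows "necessary_I_rules U M I N J =
    {((dia U M I (box U M I X), box U M I X),
      (\<Inter> (R2_class U M I N J X), up U N J (\<Inter> (R2_class U M I N J X)))) | X.
       X \<in> extents U N J \<and> X \<noteq> U \<and> dia U M I (box U M I X) \<noteq> {}}"
  (is "?necessary = ?rules_of_extents")
proof (intro subset_antisym subsetI)
  fix r assume "r \<in> ?necessary"
  moreover obtain X C Y D where r_eq: "r = ((X, C), (Y, D))"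
    by (metis prod.collapse)
  ultimately have "r \<in> I_rules U M I N J"
    and X: "dia U M I (box U M I Y) = X" and Y: "down U N J (up U N J X) = Y"
    by (auto simp: necessary_I_rules_iff)
  then have "Y \<in> extents U N J" "Y \<noteq> U" "X \<noteq> {}" "C = box U M I Y" "D = up U N J Y"
    by (auto simp: r_eq I_rules_def concepts_iff oo_concepts_iff box_dia_box)
  moreover have "\<Inter> (R2_class U M I N J Y) = Y"
    using Inter_R2_class[OF \<open>Y \<in> extents U N J\<close>, of M I] X Y by simp
  ultimately show "r \<in> ?rules_of_extents"
    unfolding r_eq using X by (intro CollectI exI[of _ Y]) auto
next
  fix r assume "r \<in> ?rules_of_extents"
  then obtain X where "X \<in> extents U N J" "X \<noteq> U" "dia U M I (box U M I X) \<noteq> {}"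
    and "r = ((dia U M I (box U M I X), box U M I X),
      (\<Inter> (R2_class U M I N J X), up U N J (\<Inter> (R2_class U M I N J X))))"
    by blast
  then show "r \<in> ?necessary"
    by (simp add: Inter_R2_class dia_box_rule_in_necessary_I_rules)
qed

end
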